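(* Let $R$ be a commutative local ring. Let $\mathcal{A}$ be a finite $R$-Hopf algebra and $S$ a faithful left $\mathcal{A}$-module algebra which is a finite commutative $R$-algebra with $\mathrm{rank}_R(S)=\mathrm{rank}_R(\mathcal{A})$, and assume $S^{\mathcal{A}}=R$. (1) If $R$ is a principal ideal domain, then $S/R$ is a tame $\mathcal{A}$-extension if and only if the Hopfological homology $S^{\mathcal{A}}/IS$ of $S$ is zero. (2) If $R$ is a field $K$ and $S/K$ is a tame $\mathcal{A}$-extension, then the Hopfological homology $M^{co\mathcal{A}^\ast}/IM$ of every right relative $(S,\mathcal{A}^\ast)$-Hopf module $M$ is zero.
   Context: A finite $R$-algebra (resp. finite $R$-Hopf algebra) is one that is finitely generated projective as an $R$-module. For a left $\mathcal{A}$-module $V$, $V^{\mathcal{A}}=\{v\in V: av=\varepsilon(a)v\ \forall a\in\mathcal{A}\}$. $I=\{\lambda\in\mathcal{A}: a\lambda=\varepsilon(a)\lambda\ \forall a\}$ is the set of left integrals, and $IV$ is the $R$-submodule generated by $\lambda v$, $\lambda\in I$, $v\in V$. The Hopfological homology of a left $\mathcal{A}$-module $V$ is $V^{\mathcal{A}}/IV$. $S$ is faithful if $as=0$ for all $s\in S$ implies $a=0$. $S$ is a tame $\mathcal{A}$-extension of $R$ if $S$ is a finite $R$-algebra and left $\mathcal{A}$-module algebra with $S^{\mathcal{A}}=R$, $\mathrm{rank}_R(\mathcal{A})=\mathrm{rank}_R(S)$, $S$ faithful, and $IS=R$. With $\mathcal{A}^\ast=\mathrm{Hom}_R(\mathcal{A},R)$,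 the $\mathcal{A}$-action on $S$ corresponds to a right $\mathcal{A}^\ast$-comodule algebra structure; a right relative $(S,\mathcal{A}^\ast)$-Hopf module is a right $S$-module and right $\mathcal{A}^\ast$-comodule $M$ with $(ms)_{(0)}\otimes(ms)_{(1)}=m_{(0)}s_{(0)}\otimes m_{(1)}s_{(1)}$. A right $\mathcal{A}^\ast$-comodule $M$ is a left $\mathcal{A}$-module via $a\cdot m=m_{(0)}\,m_{(1)}(a)$; $M^{co\mathcal{A}^\ast}=\{m: m_{(0)}\otimes m_{(1)}=m\otimes 1\}$, and its Hopfological homology is $M^{co\mathcal{A}^\ast}/IM$. *)

theory Defs
  imports Main "HOL-Library.Function_Algebras"
begin

definition is_ideal :: "'r::comm_ring_1 set \<Rightarrow> bool" where
  "is_ideal I \<longleftrightarrow> 0 \<in> I \<and> (\<forall>x\<in>I. \<forall>y\<in>I. x + y \<in> I) \<and> (\<forall>r. \<forall>x\<in>I. r * x \<in> I)"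

definition maximal_ideal :: "'r::comm_ring_1 set \<Rightarrow> bool" where
  "maximal_ideal I \<longleftrightarrow> is_ideal I \<and> I \<noteq> UNIV \<and>
     (\<forall>J. is_ideal J \<and> I \<subseteq> J \<longrightarrow> J = I \<or> J = UNIV)"

definition local_ring :: "'r::comm_ring_1 itself \<Rightarrow> bool" where
  "local_ring _ \<longleftrightarrow> (\<exists>!I::'r set. maximal_ideal I)"

definition is_pid :: "'r::comm_ring_1 itself \<Rightarrow> bool" where
  "is_pid _ \<longleftrightarrow> (0::'r) \<noteq> 1 \<and> (\<forall>x y::'r. x * y = 0 \<longrightarrow> x = 0 \<or> y = 0) \<and>
     (\<forall>I::'r set. is_ideal I \<longrightarrow> (\<exists>a. I = {r * a | r. True}))"

definition is_field :: "'r::comm_ring_1 itself \<Rightarrow> bool" where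
  "is_field _ \<longleftrightarrow> (0::'r) \<noteq> 1 \<and> (\<forall>x::'r. x \<noteq> 0 \<longrightarrow> (\<exists>y. x * y = 1))"

definition r_module :: "('r::comm_ring_1 \<Rightarrow> 'm::ab_group_add \<Rightarrow> 'm) \<Rightarrow> bool" where
  "r_module sm \<longleftrightarrow> (\<forall>r x y. sm r (x + y) = sm r x + sm r y) \<and>
     (\<forall>r s x. sm (r + s) x = sm r x + sm s x) \<and>
     (\<forall>r s x. sm (r * s) x = sm r (sm s x)) \<and> (\<forall>x. sm 1 x = x)"

definition lin :: "('r \<Rightarrow> 'm::ab_group_add \<Rightarrow> 'm) \<Rightarrow> ('r \<Rightarrow> 'n::ab_group_add \<Rightarrow> 'n)
    \<Rightarrow> ('m \<Rightarrow> 'n) \<Rightarrow> bool" where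
  "lin sm sn f \<longleftrightarrow> (\<forall>x y. f (x + y) = f x + f y) \<and> (\<forall>r x. f (sm r x) = sn r (f x))"

text \<open>Scalar action on the free modules R^n, realised as functions nat => r.\<close>
definition smF :: "'r::comm_ring_1 \<Rightarrow> (nat \<Rightarrow> 'r) \<Rightarrow> (nat \<Rightarrow> 'r)" where
  "smF r v = (\<lambda>k. r * v k)"

text \<open>Finitely generated projective = direct summand of a finite free module R^n.\<close>
definition fin_proj :: "('r::comm_ring_1 \<Rightarrow> 'm::ab_group_add \<Rightarrow> 'm) \<Rightarrow> bool" where
  "fin_proj sm \<longleftrightarrow> r_module sm \<and> (\<exists>(n::nat) i p.
      lin sm smF i \<and> lin smF sm p \<and> (\<forall>x k. n \<le> k \<longrightarrow> i x k = 0) \<and> (\<forall>x. p (i x) = x))"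

definition has_rank :: "('r::comm_ring_1 \<Rightarrow> 'm::ab_group_add \<Rightarrow> 'm) \<Rightarrow> nat \<Rightarrow> bool" where
  "has_rank sm n \<longleftrightarrow> (\<exists>b::nat \<Rightarrow> 'm. \<forall>x. \<exists>!c::nat \<Rightarrow> 'r.
      (\<forall>k. n \<le> k \<longrightarrow> c k = 0) \<and> x = (\<Sum>k<n. sm (c k) (b k)))"

section \<open>Tensor products over R, via formal sums (lists of elementary tensors)\<close>

text \<open>Equality in M \<otimes>_R N of two formal sums of elementary tensors:
  the congruence generated by the bilinearity relations.\<close>
inductive teq2 :: "('r \<Rightarrow> 'm::ab_group_add \<Rightarrow> 'm) \<Rightarrow> ('r \<Rightarrow> 'n::ab_group_add \<Rightarrow> 'n)
    \<Rightarrow> ('m \<times> 'n) list \<Rightarrow> ('m \<times> 'n) list \<Rightarrow> bool" for sm sn where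
  t2_refl: "teq2 sm sn xs xs"
| t2_sym: "teq2 sm sn xs ys \<Longrightarrow> teq2 sm sn ys xs"
| t2_trans: "teq2 sm sn xs ys \<Longrightarrow> teq2 sm sn ys zs \<Longrightarrow> teq2 sm sn xs zs"
| t2_app: "teq2 sm sn xs ys \<Longrightarrow> teq2 sm sn us vs \<Longrightarrow> teq2 sm sn (xs @ us) (ys @ vs)"
| t2_comm: "teq2 sm sn (xs @ ys) (ys @ xs)"
| t2_addL: "teq2 sm sn [(m + m', n)] [(m, n), (m', n)]"
| t2_addR: "teq2 sm sn [(m, n + n')] [(m, n), (m, n')]"
| t2_scal: "teq2 sm sn [(sm r m, n)] [(m, sn r n)]"
| t2_zeroL: "teq2 sm sn [(0, n)] []"
| t2_zeroR: "teq2 sm sn [(m, 0)] []"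

text \<open>Equality in M \<otimes>_R N \<otimes>_R P.\<close>
inductive teq3 :: "('r \<Rightarrow> 'm::ab_group_add \<Rightarrow> 'm) \<Rightarrow> ('r \<Rightarrow> 'n::ab_group_add \<Rightarrow> 'n)
    \<Rightarrow> ('r \<Rightarrow> 'p::ab_group_add \<Rightarrow> 'p)
    \<Rightarrow> ('m \<times> 'n \<times> 'p) list \<Rightarrow> ('m \<times> 'n \<times> 'p) list \<Rightarrow> bool" for sm sn sp where
  t3_refl: "teq3 sm sn sp xs xs"
| t3_sym: "teq3 sm sn sp xs ys \<Longrightarrow> teq3 sm sn sp ys xs"
| t3_trans: "teq3 sm sn sp xs ys \<Longrightarrow> teq3 sm sn sp ys zs \<Longrightarrow> teq3 sm sn sp xs zs"
| t3_app: "teq3 sm sn sp xs ys \<Longrightarrow> teq3 sm sn sp us vs \<Longrightarrow> teq3 sm sn sp (xs @ us) (ys @ vs)"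
| t3_comm: "teq3 sm sn sp (xs @ ys) (ys @ xs)"
| t3_add1: "teq3 sm sn sp [(m + m', n, p)] [(m, n, p), (m', n, p)]"
| t3_add2: "teq3 sm sn sp [(m, n + n', p)] [(m, n, p), (m, n', p)]"
| t3_add3: "teq3 sm sn sp [(m, n, p + p')] [(m, n, p), (m, n, p')]"
| t3_scal12: "teq3 sm sn sp [(sm r m, n, p)] [(m, sn r n, p)]"
| t3_scal23: "teq3 sm sn sp [(m, sn r n, p)] [(m, n, sp r p)]"
| t3_zero1: "teq3 sm sn sp [(0, n, p)] []"
| t3_zero2: "teq3 sm sn sp [(m, 0, p)] []"
| t3_zero3: "teq3 sm sn sp [(m, n, 0)] []"

definition r_algebra :: "('r::comm_ring_1 \<Rightarrow> 'a::ring_1) \<Rightarrow> bool" where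
  "r_algebra eta \<longleftrightarrow> eta 1 = 1 \<and> (\<forall>r s. eta (r + s) = eta r + eta s) \<and>
     (\<forall>r s. eta (r * s) = eta r * eta s) \<and> (\<forall>r a. eta r * a = a * eta r)"

definition alg_smult :: "('r \<Rightarrow> 'a::ring_1) \<Rightarrow> 'r \<Rightarrow> 'a \<Rightarrow> 'a" where
  "alg_smult eta r a = eta r * a"

definition tmul :: "('a::ring_1 \<times> 'a) list \<Rightarrow> ('a \<times> 'a) list \<Rightarrow> ('a \<times> 'a) list" where
  "tmul xs ys = concat (map (\<lambda>(x1, x2). map (\<lambda>(y1, y2). (x1 * y1, x2 * y2)) ys) xs)"

text \<open>A finite R-Hopf algebra: eta unit, Delta comultiplication (given by formal sums
  representing elements of A \<otimes>_R A), eps counit, ant antipode.\<close>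
definition hopf_algebra :: "('r::comm_ring_1 \<Rightarrow> 'a::ring_1) \<Rightarrow> ('a \<Rightarrow> ('a \<times> 'a) list)
    \<Rightarrow> ('a \<Rightarrow> 'r) \<Rightarrow> ('a \<Rightarrow> 'a) \<Rightarrow> bool" where
  "hopf_algebra eta Delta eps ant \<longleftrightarrow>
     (let smA = alg_smult eta in
      r_algebra eta \<and> fin_proj smA \<and>
      \<comment> \<open>Delta is R-linear\<close>
      (\<forall>a b. teq2 smA smA (Delta (a + b)) (Delta a @ Delta b)) \<and>
      (\<forall>r a. teq2 smA smA (Delta (smA r a)) (map (\<lambda>(x, y). (smA r x, y)) (Delta a))) \<and>
      \<comment> \<open>coassociativity\<close>
      (\<forall>a. teq3 smA smA smA
          (concat (map (\<lambda>(x, y). map (\<lambda>(x1, x2). (x1, x2, y)) (Delta x)) (Delta a)))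
          (concat (map (\<lambda>(x, y). map (\<lambda>(y1, y2). (x, y1, y2)) (Delta y)) (Delta a)))) \<and>
      \<comment> \<open>counit: an R-algebra map, satisfying the counit laws\<close>
      (\<forall>a b. eps (a + b) = eps a + eps b) \<and> (\<forall>a b. eps (a * b) = eps a * eps b) \<and>
      (\<forall>r a. eps (smA r a) = r * eps a) \<and> eps 1 = 1 \<and>
      (\<forall>a. sum_list (map (\<lambda>(x, y). eta (eps x) * y) (Delta a)) = a) \<and>
      (\<forall>a. sum_list (map (\<lambda>(x, y). x * eta (eps y)) (Delta a)) = a) \<and>
      \<comment> \<open>Delta is an algebra map\<close>
      (\<forall>a b. teq2 smA smA (Delta (a * b)) (tmul (Delta a) (Delta b))) \<and>
      teq2 smA smA (Delta 1) [(1, 1)] \<and>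
      \<comment> \<open>antipode\<close>
      lin smA smA ant \<and>
      (\<forall>a. sum_list (map (\<lambda>(x, y). ant x * y) (Delta a)) = eta (eps a)) \<and>
      (\<forall>a. sum_list (map (\<lambda>(x, y). x * ant y) (Delta a)) = eta (eps a)))"

definition module_algebra :: "('r::comm_ring_1 \<Rightarrow> 'a::ring_1) \<Rightarrow> ('a \<Rightarrow> ('a \<times> 'a) list)
    \<Rightarrow> ('a \<Rightarrow> 'r) \<Rightarrow> ('r \<Rightarrow> 's::comm_ring_1) \<Rightarrow> ('a \<Rightarrow> 's \<Rightarrow> 's) \<Rightarrow> bool" where
  "module_algebra eta Delta eps etaS act \<longleftrightarrow>
     r_algebra etaS \<and>
     (\<forall>a b s. act (a + b) s = act a s + act b s) \<and>
     (\<forall>a s t. act a (s + t) = act a s + act a t) \<and>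
     (\<forall>s. act 1 s = s) \<and> (\<forall>a b s. act (a * b) s = act a (act b s)) \<and>
     (\<forall>r s. act (eta r) s = etaS r * s) \<and>
     (\<forall>a s t. act a (s * t) = sum_list (map (\<lambda>(x, y). act x s * act y t) (Delta a))) \<and>
     (\<forall>a. act a 1 = etaS (eps a))"

definition invariants :: "('a \<Rightarrow> 'r) \<Rightarrow> ('r \<Rightarrow> 'v \<Rightarrow> 'v) \<Rightarrow> ('a \<Rightarrow> 'v \<Rightarrow> 'v) \<Rightarrow> 'v set" where
  "invariants eps sc act = {v. \<forall>a. act a v = sc (eps a) v}"

definition left_integrals :: "('r \<Rightarrow> 'a::ring_1) \<Rightarrow> ('a \<Rightarrow> 'r) \<Rightarrow> 'a set" where
  "left_integrals eta eps = {l. \<forall>a. a * l = eta (eps a) * l}"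

text \<open>IV: the R-submodule generated by all l v, l a left integral (I is an R-submodule,
  so finite sums suffice).\<close>
definition integral_span :: "('r \<Rightarrow> 'a::ring_1) \<Rightarrow> ('a \<Rightarrow> 'r) \<Rightarrow> ('a \<Rightarrow> 'v::monoid_add \<Rightarrow> 'v)
    \<Rightarrow> 'v set" where
  "integral_span eta eps act =
     {sum_list (map (\<lambda>(l, v). act l v) xs) | xs. \<forall>p\<in>set xs. fst p \<in> left_integrals eta eps}"

definition faithful :: "('a::ring_1 \<Rightarrow> 's::comm_ring_1 \<Rightarrow> 's) \<Rightarrow> bool" where
  "faithful act \<longleftrightarrow> (\<forall>a. (\<forall>s. act a s = 0) \<longrightarrow> a = 0)"

text \<open>Hopfological homology V^A / IV of S is zero (note IV \<subseteq> V^A always).\<close>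
definition hopf_homology_zero_S :: "('r::comm_ring_1 \<Rightarrow> 'a::ring_1) \<Rightarrow> ('a \<Rightarrow> 'r)
    \<Rightarrow> ('r \<Rightarrow> 's::comm_ring_1) \<Rightarrow> ('a \<Rightarrow> 's \<Rightarrow> 's) \<Rightarrow> bool" where
  "hopf_homology_zero_S eta eps etaS act \<longleftrightarrow>
     invariants eps (alg_smult etaS) act \<subseteq> integral_span eta eps act"

definition tame_extension :: "('r::comm_ring_1 \<Rightarrow> 'a::ring_1) \<Rightarrow> ('a \<Rightarrow> ('a \<times> 'a) list)
    \<Rightarrow> ('a \<Rightarrow> 'r) \<Rightarrow> ('r \<Rightarrow> 's::comm_ring_1) \<Rightarrow> ('a \<Rightarrow> 's \<Rightarrow> 's) \<Rightarrow> bool" where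
  "tame_extension eta Delta eps etaS act \<longleftrightarrow>
     fin_proj (alg_smult etaS) \<and> r_algebra etaS \<and>
     module_algebra eta Delta eps etaS act \<and>
     inj etaS \<and> invariants eps (alg_smult etaS) act = range etaS \<and>
     (\<exists>n. has_rank (alg_smult eta) n \<and> has_rank (alg_smult etaS) n) \<and>
     faithful act \<and>
     integral_span eta eps act = range etaS"

text \<open>Scalar action on the dual A* = Hom_R(A,R), realised as R-linear functions 'a => 'r.\<close>
definition smD :: "'r::comm_ring_1 \<Rightarrow> ('a \<Rightarrow> 'r) \<Rightarrow> ('a \<Rightarrow> 'r)" where
  "smD r f = (\<lambda>a. r * f a)"

definition dual_elem :: "('r::comm_ring_1 \<Rightarrow> 'a::ring_1) \<Rightarrow> ('a \<Rightarrow> 'r) \<Rightarrow> bool" where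
  "dual_elem eta f \<longleftrightarrow> lin (alg_smult eta) (*) f"

text \<open>Multiplication of A* (dual to Delta).\<close>
definition conv :: "('a \<Rightarrow> ('a \<times> 'a) list) \<Rightarrow> ('a \<Rightarrow> 'r::comm_ring_1) \<Rightarrow> ('a \<Rightarrow> 'r) \<Rightarrow> ('a \<Rightarrow> 'r)" where
  "conv Delta f g = (\<lambda>a. sum_list (map (\<lambda>(x, y). f x * g y) (Delta a)))"

text \<open>D represents Delta_{A*}(f) in A* \<otimes> A*: the dual of the multiplication of A.\<close>
definition represents_dual_coprod :: "('r::comm_ring_1 \<Rightarrow> 'a::ring_1) \<Rightarrow> ('a \<Rightarrow> 'r)
    \<Rightarrow> (('a \<Rightarrow> 'r) \<times> ('a \<Rightarrow> 'r)) list \<Rightarrow> bool" where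
  "represents_dual_coprod eta f D \<longleftrightarrow>
     (\<forall>(g, h)\<in>set D. dual_elem eta g \<and> dual_elem eta h) \<and>
     (\<forall>a b. sum_list (map (\<lambda>(g, h). g a * h b) D) = f (a * b))"

text \<open>L represents the coaction rho_S(s) in S \<otimes> A* corresponding to the A-action on S
  (a s = s_0 s_1(a)).\<close>
definition represents_coaction_S :: "('r::comm_ring_1 \<Rightarrow> 'a::ring_1) \<Rightarrow> ('r \<Rightarrow> 's::comm_ring_1)
    \<Rightarrow> ('a \<Rightarrow> 's \<Rightarrow> 's) \<Rightarrow> 's \<Rightarrow> ('s \<times> ('a \<Rightarrow> 'r)) list \<Rightarrow> bool" where
  "represents_coaction_S eta etaS act s L \<longleftrightarrow>
     (\<forall>(t, f)\<in>set L. dual_elem eta f) \<and>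
     (\<forall>a. act a s = sum_list (map (\<lambda>(t, f). etaS (f a) * t) L))"

text \<open>M (a type 'm) is a right relative (S, A*)-Hopf module: right S-module via smulM,
  right A*-comodule via the coaction rho : M -> M \<otimes>_R A* (formal sums), with the
  compatibility (ms)_0 \<otimes> (ms)_1 = m_0 s_0 \<otimes> m_1 s_1.\<close>
definition rel_hopf_module :: "('r::comm_ring_1 \<Rightarrow> 'a::ring_1) \<Rightarrow> ('a \<Rightarrow> ('a \<times> 'a) list)
    \<Rightarrow> ('a \<Rightarrow> 'r) \<Rightarrow> ('r \<Rightarrow> 's::comm_ring_1) \<Rightarrow> ('a \<Rightarrow> 's \<Rightarrow> 's)
    \<Rightarrow> ('m::ab_group_add \<Rightarrow> 's \<Rightarrow> 'm) \<Rightarrow> ('m \<Rightarrow> ('m \<times> ('a \<Rightarrow> 'r)) list) \<Rightarrow> bool" where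
  "rel_hopf_module eta Delta eps etaS act smulM rho \<longleftrightarrow>
     (let smM = (\<lambda>r m. smulM m (etaS r)) in
      \<comment> \<open>right S-module\<close>
      (\<forall>m m' s. smulM (m + m') s = smulM m s + smulM m' s) \<and>
      (\<forall>m s t. smulM m (s + t) = smulM m s + smulM m t) \<and>
      (\<forall>m. smulM m 1 = m) \<and> (\<forall>m s t. smulM m (s * t) = smulM (smulM m s) t) \<and>
      \<comment> \<open>right A*-comodule\<close>
      (\<forall>m. \<forall>(x, f)\<in>set (rho m). dual_elem eta f) \<and>
      (\<forall>m m'. teq2 smM smD (rho (m + m')) (rho m @ rho m')) \<and>
      (\<forall>r m. teq2 smM smD (rho (smM r m)) (map (\<lambda>(x, f). (smM r x, f)) (rho m))) \<and>
      (\<forall>m. sum_list (map (\<lambda>(x, f). smM (f 1) x) (rho m)) = m) \<and>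
      (\<forall>m Dc. (\<forall>f. dual_elem eta f \<longrightarrow> represents_dual_coprod eta f (Dc f)) \<longrightarrow>
          teq3 smM smD smD
            (concat (map (\<lambda>(x, f). map (\<lambda>(x0, x1). (x0, x1, f)) (rho x)) (rho m)))
            (concat (map (\<lambda>(x, f). map (\<lambda>(g, h). (x, g, h)) (Dc f)) (rho m)))) \<and>
      \<comment> \<open>relative Hopf module compatibility\<close>
      (\<forall>m s L. represents_coaction_S eta etaS act s L \<longrightarrow>
          teq2 smM smD (rho (smulM m s))
            (concat (map (\<lambda>(x, f). map (\<lambda>(t, g). (smulM x t, conv Delta f g)) L) (rho m)))))"

text \<open>The induced left A-action a m = m_0 m_1(a), coinvariants, and vanishing of
  the Hopfological homology M^{co A*}/IM.\<close>
definition comod_action :: "('r::comm_ring_1 \<Rightarrow> 's::comm_ring_1) \<Rightarrow> ('m::ab_group_add \<Rightarrow> 's \<Rightarrow> 'm)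
    \<Rightarrow> ('m \<Rightarrow> ('m \<times> ('a \<Rightarrow> 'r)) list) \<Rightarrow> 'a \<Rightarrow> 'm \<Rightarrow> 'm" where
  "comod_action etaS smulM rho a m = sum_list (map (\<lambda>(x, f). smulM x (etaS (f a))) (rho m))"

definition coinvariants :: "('a::ring_1 \<Rightarrow> 'r::comm_ring_1) \<Rightarrow> ('r \<Rightarrow> 's::comm_ring_1)
    \<Rightarrow> ('m::ab_group_add \<Rightarrow> 's \<Rightarrow> 'm) \<Rightarrow> ('m \<Rightarrow> ('m \<times> ('a \<Rightarrow> 'r)) list) \<Rightarrow> 'm set" where
  "coinvariants eps etaS smulM rho =
     {m. teq2 (\<lambda>r m. smulM m (etaS r)) smD (rho m) [(m, eps)]}"

definition hopf_homology_zero_M :: "('r::comm_ring_1 \<Rightarrow> 'a::ring_1) \<Rightarrow> ('a \<Rightarrow> 'r)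
    \<Rightarrow> ('r \<Rightarrow> 's::comm_ring_1) \<Rightarrow> ('m::ab_group_add \<Rightarrow> 's \<Rightarrow> 'm)
    \<Rightarrow> ('m \<Rightarrow> ('m \<times> ('a \<Rightarrow> 'r)) list) \<Rightarrow> bool" where
  "hopf_homology_zero_M eta eps etaS smulM rho \<longleftrightarrow>
     coinvariants eps etaS smulM rho \<subseteq> integral_span eta eps (comod_action etaS smulM rho)"

end

theory Submission
  imports Defs HOL.Modules
begin

(* A left integral l satisfies a l = eps(a) l, so IS always lies in the invariants S^A = R;
   tameness is therefore the same as R \<subseteq> IS, i.e. vanishing of S^A / IS.
   For a tame extension write 1 = \<Sum> l_i s_i with left integrals l_i. If m is a coinvariant
   of a relative Hopf module M, the compatibility (ms)_0 \<otimes> (ms)_1 = m s_0 \<otimes> s_1 gives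
   l (m s) = m (l s), hence m = m 1 = \<Sum> l_i (m s_i) \<in> IM. The coaction of A* on S used here
   exists because A is finite projective (dual basis lemma).
   Neither the locality of R nor the PID and field hypotheses enter the argument. *)

lemma (in additive) sum_list_map: "f (sum_list (map g xs)) = (\<Sum>x\<leftarrow>xs. f (g x))"
  by (induction xs) (simp_all add: zero add)

lemma sum_list_map_concat_map:
  "sum_list (map h (concat (map F xs))) = (\<Sum>x\<leftarrow>xs. sum_list (map h (F x)))"
  by (induction xs) auto

lemma teq2_sum_list_eq:
  fixes h :: "'m::ab_group_add \<times> 'n::ab_group_add \<Rightarrow> 'v::ab_group_add"
  assumes "teq2 sm sn xs ys"
    and "\<And>m m' n. h (m + m', n) = h (m, n) + h (m', n)"
    and "\<And>m n n'. h (m, n + n') = h (m, n) + h (m, n')"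
    and "\<And>r m n. h (sm r m, n) = h (m, sn r n)"
    and "\<And>n. h (0, n) = 0" and "\<And>m. h (m, 0) = 0"
  shows "sum_list (map h xs) = sum_list (map h ys)"
  using assms(1) by induction (auto simp: assms(2-6) add_ac)

lemma r_algebraD:
  assumes "r_algebra eta"
  shows "eta 1 = 1" "additive eta" "eta (r * s) = eta r * eta s"
  using assms unfolding r_algebra_def additive_def by blast+

lemma module_algebraD:
  assumes "module_algebra eta Delta eps etaS act"
  shows "r_algebra etaS"
    and "additive (\<lambda>a. act a s)" and "additive (act a)"
    and "act (a * b) s = act a (act b s)"
    and "act (eta r) s = etaS r * s"
  using assms unfolding module_algebra_def additive_def by simp_all

lemma rel_hopf_moduleD:
  assumes "rel_hopf_module eta Delta eps etaS act smulM rho"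
  shows "additive (\<lambda>m. smulM m s)" and "additive (smulM m)"
    and "smulM m 1 = m" and "smulM (smulM m s) t = smulM m (s * t)"
    and "represents_coaction_S eta etaS act s L \<Longrightarrow>
      teq2 (\<lambda>r m. smulM m (etaS r)) smD (rho (smulM m s))
        (concat (map (\<lambda>(x, f). map (\<lambda>(t, g). (smulM x t, conv Delta f g)) L) (rho m)))"
  using assms unfolding rel_hopf_module_def additive_def Let_def by auto

lemma integral_span_subset_invariants:
  assumes modalg: "module_algebra eta Delta eps etaS act"
  shows "integral_span eta eps act \<subseteq> invariants eps (alg_smult etaS) act"
proof
  fix v assume "v \<in> integral_span eta eps act"
  then obtain xs where xs: "\<forall>p\<in>set xs. fst p \<in> left_integrals eta eps"
    and v: "v = (\<Sum>(l, w)\<leftarrow>xs. act l w)"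
    unfolding integral_span_def by blast
  have "act a v = etaS (eps a) * v" for a
  proof -
    interpret additive "act a" by (rule module_algebraD(3)[OF modalg])
    have integral: "act a (act l w) = etaS (eps a) * act l w"
      if "l \<in> left_integrals eta eps" for l w
    proof -
      have "act a (act l w) = act (eta (eps a) * l) w"
        using that by (simp add: module_algebraD(4)[OF modalg, symmetric] left_integrals_def)
      then show ?thesis by (simp add: module_algebraD(4,5)[OF modalg])
    qed
    have "act a v = (\<Sum>(l, w)\<leftarrow>xs. etaS (eps a) * act l w)"
      unfolding v sum_list_map using xs integral
      by (intro arg_cong[where f = sum_list] map_cong) auto
    then show ?thesis
      by (simp add: v sum_list_const_mult case_prod_unfold)
  qed
  then show "v \<in> invariants eps (alg_smult etaS) act"
    by (simp add: invariants_def alg_smult_def)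
qed

lemma tame_extension_iff_hopf_homology_zero_S:
  assumes modalg: "module_algebra eta Delta eps etaS act"
    and "faithful act" and "fin_proj (alg_smult etaS)"
    and "\<exists>n. has_rank (alg_smult eta) n \<and> has_rank (alg_smult etaS) n"
    and inv: "inj etaS" "invariants eps (alg_smult etaS) act = range etaS"
  shows "tame_extension eta Delta eps etaS act \<longleftrightarrow> hopf_homology_zero_S eta eps etaS act"
proof -
  have "tame_extension eta Delta eps etaS act \<longleftrightarrow> integral_span eta eps act = range etaS"
    using assms module_algebraD(1)[OF modalg] by (simp add: tame_extension_def)
  also have "\<dots> \<longleftrightarrow> range etaS \<subseteq> integral_span eta eps act"
    using integral_span_subset_invariants[OF modalg] inv by blast
  finally show ?thesis
    unfolding hopf_homology_zero_S_def using inv by simp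
qed

lemma fin_proj_dual_basis:
  fixes eta :: "'r::comm_ring_1 \<Rightarrow> 'a::ring_1"
  assumes "fin_proj (alg_smult eta)"
  obtains n :: nat and b :: "nat \<Rightarrow> 'a" and f :: "nat \<Rightarrow> 'a \<Rightarrow> 'r"
  where "\<And>k. dual_elem eta (f k)" and "\<And>a. a = (\<Sum>k<n. eta (f k a) * b k)"
proof -
  obtain n i p where i: "lin (alg_smult eta) smF i" and p: "lin smF (alg_smult eta) p"
    and supp: "\<forall>x k. n \<le> k \<longrightarrow> i x k = 0" and retract: "\<forall>x. p (i x) = x"
    using assms unfolding fin_proj_def by blast
  define e :: "nat \<Rightarrow> nat \<Rightarrow> 'r" where "e k = (\<lambda>j. if j = k then 1 else 0)" for k
  interpret p: additive p using p unfolding lin_def additive_def by blast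
  have i_expand: "i a = (\<Sum>k<n. smF (i a k) (e k))" for a
  proof
    fix j
    interpret ev: additive "\<lambda>v :: nat \<Rightarrow> 'r. v j" by unfold_locales simp
    have "(\<Sum>k<n. smF (i a k) (e k)) j = (\<Sum>k<n. if k = j then i a k else 0)"
      unfolding ev.sum by (intro sum.cong) (auto simp: smF_def e_def)
    also have "\<dots> = i a j" by (cases "j < n") (auto simp: supp)
    finally show "i a j = (\<Sum>k<n. smF (i a k) (e k)) j" by simp
  qed
  have "dual_elem eta (\<lambda>a. i a k)" for k
    using i unfolding dual_elem_def lin_def by (simp add: smF_def)
  moreover have "a = (\<Sum>k<n. eta (i a k) * p (e k))" for a
  proof -
    have "a = p (\<Sum>k<n. smF (i a k) (e k))" using retract i_expand by metis
    also have "\<dots> = (\<Sum>k<n. eta (i a k) * p (e k))"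
      using p unfolding p.sum lin_def alg_smult_def by simp
    finally show ?thesis .
  qed
  ultimately show thesis by (rule that)
qed

lemma represents_coaction_S_exists:
  fixes eta :: "'r::comm_ring_1 \<Rightarrow> 'a::ring_1"
  assumes "fin_proj (alg_smult eta)" and modalg: "module_algebra eta Delta eps etaS act"
  obtains L where "represents_coaction_S eta etaS act s L"
proof -
  obtain n :: nat and b :: "nat \<Rightarrow> 'a" and f :: "nat \<Rightarrow> 'a \<Rightarrow> 'r"
    where f: "\<And>k. dual_elem eta (f k)" and b: "\<And>a. a = (\<Sum>k<n. eta (f k a) * b k)"
    using fin_proj_dual_basis[OF assms(1)] by metis
  interpret additive "\<lambda>a. act a s" by (rule module_algebraD(2)[OF modalg])
  define L where "L = map (\<lambda>k. (act (b k) s, f k)) [0..<n]"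
  have expand: "act a s = (\<Sum>(t, g)\<leftarrow>L. etaS (g a) * t)" for a
  proof -
    have "act a s = act (\<Sum>k<n. eta (f k a) * b k) s" by (simp only: b[of a, symmetric])
    also have "\<dots> = (\<Sum>k<n. act (eta (f k a) * b k) s)" by (rule sum)
    also have "\<dots> = (\<Sum>k<n. etaS (f k a) * act (b k) s)"
      by (simp only: module_algebraD(4,5)[OF modalg])
    also have "\<dots> = (\<Sum>(t, g)\<leftarrow>L. etaS (g a) * t)"
      by (simp add: L_def interv_sum_list_conv_sum_set_nat atLeast0LessThan comp_def)
    finally show ?thesis .
  qed
  moreover have "\<forall>(t, g)\<in>set L. dual_elem eta g"
    using f by (auto simp: L_def)
  ultimately show thesis
    using that unfolding represents_coaction_S_def by blast
qed

lemma conv_add_left: "conv Delta (f + f') g a = conv Delta f g a + conv Delta f' g a"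
  unfolding conv_def by (simp add: case_prod_unfold distrib_right sum_list_addf)

lemma conv_zero_left: "conv Delta 0 g a = 0"
  unfolding conv_def by (simp add: case_prod_unfold)

lemma conv_smD_left: "conv Delta (smD r f) g a = r * conv Delta f g a"
  unfolding conv_def smD_def by (simp add: case_prod_unfold mult.assoc sum_list_const_mult)

lemma conv_counit_left:
  assumes hopf: "hopf_algebra eta Delta eps ant" and g: "dual_elem eta g"
  shows "conv Delta eps g a = g a"
proof -
  interpret additive g using g unfolding dual_elem_def lin_def additive_def by blast
  have g_scale: "g (eta r * x) = r * g x" for r x
    using g unfolding dual_elem_def lin_def alg_smult_def by blast
  have "g a = g (\<Sum>(x, y)\<leftarrow>Delta a. eta (eps x) * y)"
    using hopf unfolding hopf_algebra_def Let_def by metis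
  also have "\<dots> = conv Delta eps g a"
    unfolding sum_list_map conv_def by (simp add: case_prod_unfold g_scale)
  finally show ?thesis by simp
qed

lemma comod_action_smul:
  assumes rel: "rel_hopf_module eta Delta eps etaS act smulM rho"
    and modalg: "module_algebra eta Delta eps etaS act"
    and L: "represents_coaction_S eta etaS act s L"
  shows "comod_action etaS smulM rho l (smulM m s) =
    (\<Sum>(x, f)\<leftarrow>rho m. \<Sum>(t, g)\<leftarrow>L. smulM x (t * etaS (conv Delta f g l)))"
proof -
  note etaS = additive.add[OF r_algebraD(2)] additive.zero[OF r_algebraD(2)] r_algebraD(3)
  note smul = additive.add[OF rel_hopf_moduleD(1)[OF rel]] additive.zero[OF rel_hopf_moduleD(1)[OF rel]]
    additive.add[OF rel_hopf_moduleD(2)[OF rel]] additive.zero[OF rel_hopf_moduleD(2)[OF rel]]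
    rel_hopf_moduleD(4)[OF rel]
  have "comod_action etaS smulM rho l (smulM m s) = (\<Sum>(x, f)\<leftarrow>rho (smulM m s). smulM x (etaS (f l)))"
    by (simp add: comod_action_def)
  also have "\<dots> = (\<Sum>(x, f)\<leftarrow>concat (map (\<lambda>(x, f). map (\<lambda>(t, g). (smulM x t, conv Delta f g)) L) (rho m)).
      smulM x (etaS (f l)))"
    using rel_hopf_moduleD(5)[OF rel L]
    by (rule teq2_sum_list_eq) (auto simp: etaS[OF module_algebraD(1)[OF modalg]] smul smD_def)
  also have "\<dots> = (\<Sum>(x, f)\<leftarrow>rho m. \<Sum>(t, g)\<leftarrow>L. smulM x (t * etaS (conv Delta f g l)))"
    by (simp add: sum_list_map_concat_map case_prod_unfold comp_def smul)
  finally show ?thesis .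
qed

lemma comod_action_smul_coinvariant:
  assumes hopf: "hopf_algebra eta Delta eps ant"
    and modalg: "module_algebra eta Delta eps etaS act"
    and rel: "rel_hopf_module eta Delta eps etaS act smulM rho"
    and m: "m \<in> coinvariants eps etaS smulM rho"
  shows "comod_action etaS smulM rho l (smulM m s) = smulM m (act l s)"
proof -
  note etaS = additive.add[OF r_algebraD(2)] additive.zero[OF r_algebraD(2)] r_algebraD(3)
  note smul = additive.add[OF rel_hopf_moduleD(1)[OF rel]] additive.zero[OF rel_hopf_moduleD(1)[OF rel]]
    additive.add[OF rel_hopf_moduleD(2)[OF rel]] additive.zero[OF rel_hopf_moduleD(2)[OF rel]]
    rel_hopf_moduleD(4)[OF rel]
  have hopf_fp: "fin_proj (alg_smult eta)"
    using hopf unfolding hopf_algebra_def Let_def by blast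
  obtain L where L: "represents_coaction_S eta etaS act s L"
    by (rule represents_coaction_S_exists[OF hopf_fp modalg])
  have "comod_action etaS smulM rho l (smulM m s) =
      (\<Sum>(x, f)\<leftarrow>rho m. \<Sum>(t, g)\<leftarrow>L. smulM x (t * etaS (conv Delta f g l)))"
    by (rule comod_action_smul[OF rel modalg L])
  also have "\<dots> = (\<Sum>(x, f)\<leftarrow>[(m, eps)]. \<Sum>(t, g)\<leftarrow>L. smulM x (t * etaS (conv Delta f g l)))"
    using m unfolding coinvariants_def mem_Collect_eq
    by (rule teq2_sum_list_eq)
      (auto simp: etaS[OF module_algebraD(1)[OF modalg]] smul conv_add_left conv_zero_left
        conv_smD_left case_prod_unfold sum_list_addf mult_ac distrib_left)
  also have "\<dots> = smulM m (\<Sum>(t, g)\<leftarrow>L. etaS (g l) * t)"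
  proof -
    have "conv Delta eps g l = g l" if "(t, g) \<in> set L" for t g
      using L that conv_counit_left[OF hopf] unfolding represents_coaction_S_def by blast
    then show ?thesis
      unfolding additive.sum_list_map[OF rel_hopf_moduleD(2)[OF rel]]
      by (auto simp: mult.commute intro!: arg_cong[where f = sum_list])
  qed
  also have "\<dots> = smulM m (act l s)"
    using L unfolding represents_coaction_S_def by simp
  finally show ?thesis .
qed

lemma hopf_homology_zero_M_if_one_in_integral_span:
  assumes hopf: "hopf_algebra eta Delta eps ant"
    and modalg: "module_algebra eta Delta eps etaS act"
    and rel: "rel_hopf_module eta Delta eps etaS act smulM rho"
    and one: "1 \<in> integral_span eta eps act"
  shows "hopf_homology_zero_M eta eps etaS smulM rho"
  unfolding hopf_homology_zero_M_def
proof
  fix m assume m: "m \<in> coinvariants eps etaS smulM rho"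
  obtain xs where xs: "\<forall>p\<in>set xs. fst p \<in> left_integrals eta eps"
    and one_eq: "1 = (\<Sum>(l, s)\<leftarrow>xs. act l s)"
    using one unfolding integral_span_def by blast
  interpret additive "smulM m" by (rule rel_hopf_moduleD(2)[OF rel])
  have "m = smulM m (\<Sum>(l, s)\<leftarrow>xs. act l s)"
    using rel_hopf_moduleD(3)[OF rel] one_eq by metis
  also have "\<dots> = (\<Sum>(l, s)\<leftarrow>map (\<lambda>(l, s). (l, smulM m s)) xs. comod_action etaS smulM rho l s)"
    by (simp add: sum_list_map comp_def case_prod_unfold
        comod_action_smul_coinvariant[OF hopf modalg rel m])
  finally have "m = \<dots>" .
  moreover have "\<forall>p\<in>set (map (\<lambda>(l, s). (l, smulM m s)) xs). fst p \<in> left_integrals eta eps"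
    using xs by auto
  ultimately show "m \<in> integral_span eta eps (comod_action etaS smulM rho)"
    unfolding integral_span_def by blast
qed

theorem mainTheorem2:
  fixes eta :: "'r::comm_ring_1 \<Rightarrow> 'a::ring_1"
    and Delta :: "'a \<Rightarrow> ('a \<times> 'a) list"
    and eps :: "'a \<Rightarrow> 'r"
    and ant :: "'a \<Rightarrow> 'a"
    and etaS :: "'r \<Rightarrow> 's::comm_ring_1"
    and act :: "'a \<Rightarrow> 's \<Rightarrow> 's"
  assumes local: "local_ring TYPE('r)"
    and hopf: "hopf_algebra eta Delta eps ant"
    and modalg: "module_algebra eta Delta eps etaS act"
    and faith: "faithful act"
    and finS: "fin_proj (alg_smult etaS)"
    and rank: "\<exists>n. has_rank (alg_smult eta) n \<and> has_rank (alg_smult etaS) n"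
    and inv: "inj etaS \<and> invariants eps (alg_smult etaS) act = range etaS"
  shows "(is_pid TYPE('r) \<longrightarrow>
            (tame_extension eta Delta eps etaS act \<longleftrightarrow> hopf_homology_zero_S eta eps etaS act))
       \<and> (is_field TYPE('r) \<and> tame_extension eta Delta eps etaS act \<longrightarrow>
            (\<forall>(smulM :: 'm::ab_group_add \<Rightarrow> 's \<Rightarrow> 'm) rho.
               rel_hopf_module eta Delta eps etaS act smulM rho \<longrightarrow>
               hopf_homology_zero_M eta eps etaS smulM rho))"
proof (intro conjI impI allI)
  show "tame_extension eta Delta eps etaS act \<longleftrightarrow> hopf_homology_zero_S eta eps etaS act"
    using tame_extension_iff_hopf_homology_zero_S[OF modalg faith finS rank] inv by blast
next
  fix smulM :: "'m::ab_group_add \<Rightarrow> 's \<Rightarrow> 'm" and rho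
  assume "is_field TYPE('r) \<and> tame_extension eta Delta eps etaS act"
    and rel: "rel_hopf_module eta Delta eps etaS act smulM rho"
  then have "integral_span eta eps act = range etaS"
    unfolding tame_extension_def by blast
  moreover have "etaS 1 = 1"
    using r_algebraD(1)[OF module_algebraD(1)[OF modalg]] .
  ultimately have "1 \<in> integral_span eta eps act" by (metis rangeI)
  then show "hopf_homology_zero_M eta eps etaS smulM rho"
    by (rule hopf_homology_zero_M_if_one_in_integral_span[OF hopf modalg rel])
qed

end
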